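(* Fix $K>0$ and $z\in\mathbb{C}$, and assume $b_n\ge m\ge m_0$ for a sufficiently large constant $m_0$. For all sufficiently large $n$ (depending on $K$) the following holds on the event $\mathcal{E}_K$: for every unit vector $v\in\mathbb{C}^n$ with $\|X_z v\|\le b_n^{-10m}m^{-1/2}$, and for every $i\in[m-1]$, either $\|v_{[i]}\|\ge b_n^{-10m}m^{-1/2}$ or $\|v_{[i+1]}\|\ge b_n^{-10m}m^{-1/2}$.
   Context: Let $b_n$ divide $n$, $m=n/b_n$, $c_n=3b_n$. Let $\tilde D_i,\tilde U_i,\tilde T_i$ ($i\in[m]$) be $b_n\times b_n$ matrices, $D_i=\tilde D_i/\sqrt{c_n}$, $U_i=\tilde U_i/\sqrt{c_n}$, $T_i=\tilde T_i/\sqrt{c_n}$, $(D_i)_z=D_i-zI_{b_n}$. Let $X$ be the $n\times n$ block matrix ($m\times m$ blocks of size $b_n$, block indices modulo $m$) with $(i,i)$ block $D_i$, $(i,i-1)$ block $T_{i-1}$, $(i,i+1)$ block $U_{i+1}$, other blocks zero, and $X_z=X-zI$. $\mathcal{E}_K$ is the event that for all $i\in[m]$: $\|U_i\|,\|(D_i)_z\|,\|T_i\|\le K$ and the smallest singular values satisfy $s_{b_n}(U_i),s_{b_n}(T_i)\ge b_n^{-5}$. For $v\in\mathbb{C}^n$, $v_{[1]},\dots,v_{[m]}\in\mathbb{C}^{b_n}$ are the consecutive blocks of $b_n$ coordinates of $v$. *)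

theory Defs
  imports Complex_Main
begin

text \<open>Vectors in C^k are functions nat => complex (only indices < k matter);
  k x k matrices are functions nat => nat => complex (only indices < k matter).\<close>

type_synonym cvec = "nat \<Rightarrow> complex"
type_synonym cmat = "nat \<Rightarrow> nat \<Rightarrow> complex"

definition vnorm :: "nat \<Rightarrow> cvec \<Rightarrow> real" where
  "vnorm k v = sqrt (\<Sum>p<k. (cmod (v p))\<^sup>2)"

definition mv :: "nat \<Rightarrow> cmat \<Rightarrow> cvec \<Rightarrow> cvec" where
  "mv k A v = (\<lambda>p. \<Sum>q<k. A p q * v q)"

definition opnorm :: "nat \<Rightarrow> cmat \<Rightarrow> real" where
  "opnorm k A = Sup {vnorm k (mv k A x) | x. vnorm k x = 1}"

definition smin :: "nat \<Rightarrow> cmat \<Rightarrow> real" where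
  "smin k A = Inf {vnorm k (mv k A x) | x. vnorm k x = 1}"

definition shiftz :: "cmat \<Rightarrow> complex \<Rightarrow> cmat" where
  "shiftz A z = (\<lambda>r s. A r s - (if r = s then z else 0))"

text \<open>Normalisation by sqrt(c_n), c_n = 3 b_n.\<close>
definition cscale :: "nat \<Rightarrow> cmat \<Rightarrow> cmat" where
  "cscale b A = (\<lambda>r s. A r s / complex_of_real (sqrt (3 * real b)))"

text \<open>The n x n block matrix X (n = b*m), blocks indexed 0..m-1 modulo m:
  block (i,i) = D i, block (i,i-1) = T (i-1), block (i,i+1) = U (i+1).\<close>
definition blockX :: "nat \<Rightarrow> nat \<Rightarrow> (nat \<Rightarrow> cmat) \<Rightarrow> (nat \<Rightarrow> cmat) \<Rightarrow> (nat \<Rightarrow> cmat) \<Rightarrow> cmat" where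
  "blockX b m D U T = (\<lambda>p q.
     let i = p div b; r = p mod b; j = q div b; s = q mod b in
       (if j = i then D i r s else 0)
     + (if j = (i + m - 1) mod m then T ((i + m - 1) mod m) r s else 0)
     + (if j = (i + 1) mod m then U ((i + 1) mod m) r s else 0))"

text \<open>The i-th block v_[i] of b consecutive coordinates (0-based).\<close>
definition blk :: "nat \<Rightarrow> cvec \<Rightarrow> nat \<Rightarrow> cvec" where
  "blk b v i = (\<lambda>r. v (i * b + r))"

definition eventE :: "real \<Rightarrow> complex \<Rightarrow> nat \<Rightarrow> nat \<Rightarrow> (nat \<Rightarrow> cmat) \<Rightarrow> (nat \<Rightarrow> cmat) \<Rightarrow> (nat \<Rightarrow> cmat) \<Rightarrow> bool" where
  "eventE K z b m D U T \<longleftrightarrow>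
     (\<forall>i<m. opnorm b (U i) \<le> K \<and> opnorm b (shiftz (D i) z) \<le> K \<and> opnorm b (T i) \<le> K
          \<and> smin b (U i) \<ge> real b powr (-5) \<and> smin b (T i) \<ge> real b powr (-5))"

end

theory Submission
  imports Defs "HOL-Analysis.L2_Norm"
begin

text \<open>Block row i of X_z v = w reads U_{i+1} v_[i+1] = w_[i] - (D_i)_z v_[i] - T_{i-1} v_[i-1],
  indices taken mod m. Since s_min(U_{i+1}) >= b^-5 and the other two blocks have norm at most K,
  |v_[i+1]| <= b^5 (|w| + K |v_[i]| + K |v_[i-1]|): each block is controlled by the two preceding
  ones. If two consecutive blocks had norm below eps = b^(-10m) m^(-1/2), going once around the
  cycle would bound every block by (b^5 (1 + 2K))^(m-1) eps <= b^(6m) eps (as b >= 1 + 2K), hence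
  |v| <= sqrt m b^(6m) eps = b^(-4m) < 1, contradicting |v| = 1.\<close>

lemma vnorm_eq_L2_set: "vnorm k v = L2_set (\<lambda>p. cmod (v p)) {..<k}"
  by (simp add: vnorm_def L2_set_def)

lemma vnorm_nonneg: "0 \<le> vnorm k v"
  by (simp add: vnorm_eq_L2_set)

lemma vnorm_cong: "(\<And>p. p < k \<Longrightarrow> x p = y p) \<Longrightarrow> vnorm k x = vnorm k y"
  unfolding vnorm_def by (intro arg_cong[where f = sqrt] sum.cong) auto

lemma vnorm_mult: "vnorm k (\<lambda>p. c * x p) = cmod c * vnorm k x"
  unfolding vnorm_eq_L2_set by (simp add: L2_set_right_distrib norm_mult)

lemma vnorm_diff_le: "vnorm k (\<lambda>p. x p - y p) \<le> vnorm k x + vnorm k y"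
proof -
  have "vnorm k (\<lambda>p. x p - y p) \<le> L2_set (\<lambda>p. cmod (x p) + cmod (y p)) {..<k}"
    unfolding vnorm_eq_L2_set by (rule L2_set_mono) (auto simp: norm_triangle_ineq4)
  also have "\<dots> \<le> vnorm k x + vnorm k y"
    unfolding vnorm_eq_L2_set by (rule L2_set_triangle_ineq)
  finally show ?thesis .
qed

lemma norm_le_vnorm: "p < k \<Longrightarrow> cmod (v p) \<le> vnorm k v"
  unfolding vnorm_eq_L2_set by (rule member_le_L2_set) auto

lemma mv_mult: "mv k A (\<lambda>q. c * x q) = (\<lambda>p. c * mv k A x p)"
  unfolding mv_def by (simp add: sum_distrib_left mult_ac)

lemma vnorm_mv_le_entry_sum: "vnorm k (mv k A x) \<le> (\<Sum>p<k. \<Sum>q<k. cmod (A p q)) * vnorm k x"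
proof -
  have row: "cmod (mv k A x p) \<le> (\<Sum>q<k. cmod (A p q)) * vnorm k x" for p
  proof -
    have "cmod (mv k A x p) \<le> (\<Sum>q<k. cmod (A p q) * cmod (x q))"
      unfolding mv_def norm_mult[symmetric] by (rule norm_sum)
    also have "\<dots> \<le> (\<Sum>q<k. cmod (A p q) * vnorm k x)"
      by (intro sum_mono mult_left_mono norm_le_vnorm) auto
    finally show ?thesis by (simp add: sum_distrib_right)
  qed
  have "vnorm k (mv k A x) \<le> (\<Sum>p<k. cmod (mv k A x p))"
    unfolding vnorm_eq_L2_set by (rule L2_set_le_sum) auto
  also have "\<dots> \<le> (\<Sum>p<k. (\<Sum>q<k. cmod (A p q)) * vnorm k x)"
    by (intro sum_mono row)
  finally show ?thesis by (simp add: sum_distrib_right)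
qed

lemma vnorm_mv_normalize:
  assumes "vnorm k x \<noteq> 0"
  obtains y where "vnorm k y = 1" and "vnorm k (mv k A x) = vnorm k (mv k A y) * vnorm k x"
proof
  define t where "t = vnorm k x"
  have t: "t > 0"
    using assms vnorm_nonneg[of k x] unfolding t_def by linarith
  show "vnorm k (\<lambda>q. complex_of_real (1 / t) * x q) = 1"
    unfolding vnorm_mult using t by (simp add: t_def norm_divide)
  show "vnorm k (mv k A x) = vnorm k (mv k A (\<lambda>q. complex_of_real (1 / t) * x q)) * vnorm k x"
    unfolding mv_mult vnorm_mult using t by (simp add: t_def norm_divide)
qed

lemma vnorm_mv_le_opnorm: "vnorm k (mv k A x) \<le> opnorm k A * vnorm k x"
proof (cases "vnorm k x = 0")
  case True
  then have "\<forall>q<k. x q = 0"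
    by (simp add: vnorm_eq_L2_set L2_set_eq_0_iff)
  then have "vnorm k (mv k A x) = 0"
    by (simp add: mv_def vnorm_def)
  then show ?thesis
    using True by simp
next
  case False
  then obtain y where y: "vnorm k y = 1" "vnorm k (mv k A x) = vnorm k (mv k A y) * vnorm k x"
    by (rule vnorm_mv_normalize)
  have "vnorm k (mv k A u) \<le> (\<Sum>p<k. \<Sum>q<k. cmod (A p q))" if "vnorm k u = 1" for u
    using vnorm_mv_le_entry_sum[of k A u] that by simp
  then have "bdd_above {vnorm k (mv k A x) | x. vnorm k x = 1}"
    by (intro bdd_aboveI[of _ "\<Sum>p<k. \<Sum>q<k. cmod (A p q)"]) auto
  then have "vnorm k (mv k A y) \<le> opnorm k A"
    unfolding opnorm_def by (rule cSup_upper[rotated]) (use y in blast)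
  then show ?thesis
    using y vnorm_nonneg[of k x] by (simp add: mult_right_mono)
qed

lemma smin_le_vnorm_mv: "smin k A * vnorm k x \<le> vnorm k (mv k A x)"
proof (cases "vnorm k x = 0")
  case True
  then show ?thesis
    by (simp add: vnorm_nonneg)
next
  case False
  then obtain y where y: "vnorm k y = 1" "vnorm k (mv k A x) = vnorm k (mv k A y) * vnorm k x"
    by (rule vnorm_mv_normalize)
  have "bdd_below {vnorm k (mv k A x) | x. vnorm k x = 1}"
    using vnorm_nonneg by (intro bdd_belowI) force
  then have "smin k A \<le> vnorm k (mv k A y)"
    unfolding smin_def by (rule cInf_lower[rotated]) (use y in blast)
  then show ?thesis
    using y vnorm_nonneg[of k x] by (simp add: mult_right_mono)
qed

lemma sum_lessThan_blocks:
  fixes b m :: nat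
  shows "(\<Sum>q<b * m. f q) = (\<Sum>j<m. \<Sum>t<b. f (j * b + t))"
proof -
  have "(\<Sum>q<b * m. f q) = (\<Sum>j<m. sum f {j * b..<j * b + b})"
    unfolding mult.commute[of b m] by (rule sum.nat_group[symmetric])
  also have "\<dots> = (\<Sum>j<m. \<Sum>t<b. f (j * b + t))"
    by (simp add: sum.shift_bounds_nat_ivl[where m = 0, simplified] atLeast0LessThan add.commute)
  finally show ?thesis .
qed

lemma vnorm_square_blocks: "(vnorm (b * m) v)\<^sup>2 = (\<Sum>j<m. (vnorm b (blk b v j))\<^sup>2)"
  unfolding vnorm_def by (simp add: sum_nonneg sum_lessThan_blocks blk_def)

lemma vnorm_blk_le: "j < m \<Longrightarrow> vnorm b (blk b v j) \<le> vnorm (b * m) v"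
  by (rule power2_le_imp_le)
    (auto simp: vnorm_square_blocks vnorm_nonneg intro!: member_le_sum)

lemma vnorm_le_of_blocks_le:
  assumes "0 \<le> \<beta>" and "\<And>j. j < m \<Longrightarrow> vnorm b (blk b v j) \<le> \<beta>"
  shows "vnorm (b * m) v \<le> sqrt (real m) * \<beta>"
proof (rule power2_le_imp_le)
  have "(vnorm (b * m) v)\<^sup>2 \<le> (\<Sum>j<m. \<beta>\<^sup>2)"
    unfolding vnorm_square_blocks using assms
    by (intro sum_mono power_mono) (auto simp: vnorm_nonneg)
  then show "(vnorm (b * m) v)\<^sup>2 \<le> (sqrt (real m) * \<beta>)\<^sup>2"
    by (simp add: power_mult_distrib)
  show "0 \<le> sqrt (real m) * \<beta>"
    using assms(1) by simp
qed

lemma blk_mv_blockX: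
  assumes m: "0 < m" and i: "i < m" and s: "s < b"
  shows "blk b (mv (b * m) (shiftz (blockX b m D U T) z) v) i s =
    mv b (shiftz (D i) z) (blk b v i) s
    + mv b (T ((i + m - 1) mod m)) (blk b v ((i + m - 1) mod m)) s
    + mv b (U ((i + 1) mod m)) (blk b v ((i + 1) mod m)) s"
proof -
  define i_prev where "i_prev = (i + m - 1) mod m"
  define i_next where "i_next = (i + 1) mod m"
  have "i_prev < m" "i_next < m"
    using m by (auto simp: i_prev_def i_next_def)
  define x_diag where "x_diag = mv b (shiftz (D i) z) (blk b v i) s"
  define x_prev where "x_prev = mv b (T i_prev) (blk b v i_prev) s"
  define x_next where "x_next = mv b (U i_next) (blk b v i_next) s"
  have entry: "shiftz (blockX b m D U T) z (i * b + s) (j * b + t) * v (j * b + t) =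
      (if j = i then shiftz (D i) z s t * blk b v i t else 0)
    + (if j = i_prev then T i_prev s t * blk b v i_prev t else 0)
    + (if j = i_next then U i_next s t * blk b v i_next t else 0)" if t: "t < b" for j t
  proof -
    have row: "(i * b + s) div b = i" "(i * b + s) mod b = s"
      using s by auto
    have col: "(j * b + t) div b = j" "(j * b + t) mod b = t"
      using t by auto
    have "i * b + s = j * b + t \<longleftrightarrow> j = i \<and> s = t"
      using row col by metis
    then show ?thesis
      unfolding shiftz_def blockX_def Let_def row col blk_def i_prev_def[symmetric] i_next_def[symmetric]
      by (auto simp: algebra_simps)
  qed
  have block_row: "(\<Sum>t<b. shiftz (blockX b m D U T) z (i * b + s) (j * b + t) * v (j * b + t)) =
      (if j = i then x_diag else 0) + (if j = i_prev then x_prev else 0) + (if j = i_next then x_next else 0)"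
    for j
    by (simp add: entry sum.distrib x_diag_def x_prev_def x_next_def mv_def)
  have "blk b (mv (b * m) (shiftz (blockX b m D U T) z) v) i s =
      (\<Sum>j<m. (if j = i then x_diag else 0) + (if j = i_prev then x_prev else 0) + (if j = i_next then x_next else 0))"
    unfolding blk_def mv_def sum_lessThan_blocks block_row by simp
  also have "\<dots> = x_diag + x_prev + x_next"
    using i \<open>i_prev < m\<close> \<open>i_next < m\<close> by (simp add: sum.distrib)
  finally show ?thesis
    by (simp add: x_diag_def x_prev_def x_next_def i_prev_def i_next_def)
qed

lemma mod_add_pred_eq:
  fixes m r :: nat
  assumes m: "0 < m"
  shows "((r + 1) mod m + m - 1) mod m = r mod m"
proof -
  have "((r + 1) mod m + m - 1) mod m = ((r + 1) mod m + (m - 1)) mod m"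
    using m by simp
  also have "\<dots> = (r + 1 + (m - 1)) mod m"
    by (rule mod_add_left_eq)
  also have "r + 1 + (m - 1) = r + m"
    using m by simp
  finally show ?thesis
    by simp
qed

lemma vnorm_mv_blk_next_le:
  assumes m: "0 < m" and i: "i < m"
  shows "vnorm b (mv b (U ((i + 1) mod m)) (blk b v ((i + 1) mod m)))
    \<le> vnorm b (blk b (mv (b * m) (shiftz (blockX b m D U T) z) v) i)
      + vnorm b (mv b (shiftz (D i) z) (blk b v i))
      + vnorm b (mv b (T ((i + m - 1) mod m)) (blk b v ((i + m - 1) mod m)))"
proof -
  define w where "w = blk b (mv (b * m) (shiftz (blockX b m D U T) z) v) i"
  define x_diag where "x_diag = mv b (shiftz (D i) z) (blk b v i)"
  define x_prev where "x_prev = mv b (T ((i + m - 1) mod m)) (blk b v ((i + m - 1) mod m))"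
  have "vnorm b (mv b (U ((i + 1) mod m)) (blk b v ((i + 1) mod m)))
      = vnorm b (\<lambda>s. w s - x_diag s - x_prev s)"
    by (intro vnorm_cong) (simp add: w_def x_diag_def x_prev_def blk_mv_blockX[OF m i])
  also have "\<dots> \<le> vnorm b (\<lambda>s. w s - x_diag s) + vnorm b x_prev"
    by (rule vnorm_diff_le)
  also have "\<dots> \<le> vnorm b w + vnorm b x_diag + vnorm b x_prev"
    using vnorm_diff_le[of b w x_diag] by simp
  finally show ?thesis
    by (simp add: w_def x_diag_def x_prev_def)
qed

lemma blk_le_neighbours:
  assumes m: "0 < m" and b: "0 < b" and E: "eventE K z b m D U T"
    and Xv: "vnorm (b * m) (mv (b * m) (shiftz (blockX b m D U T) z) v) \<le> \<epsilon>"
  shows "vnorm b (blk b v ((r + 2) mod m)) \<le>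
    real b ^ 5 * (\<epsilon> + K * (vnorm b (blk b v ((r + 1) mod m)) + vnorm b (blk b v (r mod m))))"
proof -
  define i where "i = (r + 1) mod m"
  have i: "i < m"
    using m by (simp add: i_def)
  have next_i: "(i + 1) mod m = (r + 2) mod m"
    by (simp add: i_def mod_Suc_eq)
  have prev_i: "(i + m - 1) mod m = r mod m"
    unfolding i_def using m by (rule mod_add_pred_eq)
  define x where "x = blk b v"
  let ?U = "U ((r + 2) mod m)" and ?D = "shiftz (D i) z" and ?T = "T (r mod m)"
  have "real b powr (-5) * vnorm b (x ((r + 2) mod m)) \<le> smin b ?U * vnorm b (x ((r + 2) mod m))"
    using E m unfolding eventE_def by (auto intro!: mult_right_mono simp: vnorm_nonneg)
  also have "\<dots> \<le> vnorm b (mv b ?U (x ((r + 2) mod m)))"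
    by (rule smin_le_vnorm_mv)
  also have "\<dots> \<le> vnorm b (blk b (mv (b * m) (shiftz (blockX b m D U T) z) v) i)
      + vnorm b (mv b ?D (x i)) + vnorm b (mv b ?T (x (r mod m)))"
    using vnorm_mv_blk_next_le[OF m i, of b U v D T z] unfolding next_i prev_i x_def .
  also have "\<dots> \<le> \<epsilon> + K * vnorm b (x i) + K * vnorm b (x (r mod m))"
  proof -
    have "vnorm b (blk b (mv (b * m) (shiftz (blockX b m D U T) z) v) i) \<le> \<epsilon>"
      using vnorm_blk_le[OF i] Xv by (rule order_trans)
    moreover have "vnorm b (mv b ?D (x i)) \<le> K * vnorm b (x i)"
      using vnorm_mv_le_opnorm[of b ?D] E i unfolding eventE_def
      by (meson mult_right_mono order_trans vnorm_nonneg)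
    moreover have "vnorm b (mv b ?T (x (r mod m))) \<le> K * vnorm b (x (r mod m))"
      using vnorm_mv_le_opnorm[of b ?T] E m unfolding eventE_def
      by (meson mult_right_mono order_trans vnorm_nonneg mod_less_divisor)
    ultimately show ?thesis
      by linarith
  qed
  finally have "vnorm b (x ((r + 2) mod m)) / real b ^ 5 \<le> \<epsilon> + K * vnorm b (x i) + K * vnorm b (x (r mod m))"
    using b by (simp add: powr_minus powr_realpow divide_inverse mult.commute)
  then show ?thesis
    using b by (simp add: x_def i_def divide_le_eq algebra_simps)
qed

lemma two_step_recurrence_bound:
  fixes c :: "nat \<Rightarrow> real"
  assumes "0 \<le> \<epsilon>" "0 \<le> A" "0 \<le> B" "1 \<le> A * (1 + 2 * B)"
    and "c 0 \<le> \<epsilon>" "c 1 \<le> \<epsilon>"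
    and rec: "\<And>k. c (k + 2) \<le> A * (\<epsilon> + B * (c (k + 1) + c k))"
  shows "c k \<le> (A * (1 + 2 * B)) ^ k * \<epsilon>"
proof -
  define C where "C = A * (1 + 2 * B)"
  have C: "1 \<le> C"
    using assms(4) by (simp add: C_def)
  have eps_le: "\<epsilon> \<le> C ^ j * \<epsilon>" for j
    using mult_right_mono[OF one_le_power[OF C, of j] assms(1)] by simp
  have grow: "C ^ j * \<epsilon> \<le> C ^ (j + 1) * \<epsilon>" for j
    using C assms(1) by (intro mult_right_mono power_increasing) auto
  have "c k \<le> C ^ k * \<epsilon> \<and> c (k + 1) \<le> C ^ (k + 1) * \<epsilon>"
  proof (induction k)
    case 0
    then show ?case
      using assms(5,6) eps_le[of 1] by simp
  next
    case (Suc k)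
    have "c (k + 2) \<le> A * (\<epsilon> + B * (c (k + 1) + c k))"
      by (rule rec)
    also have "\<dots> \<le> A * (C ^ (k + 1) * \<epsilon> + B * (C ^ (k + 1) * \<epsilon> + C ^ (k + 1) * \<epsilon>))"
      using Suc.IH grow[of k] eps_le[of "k + 1"] assms(2,3)
      by (intro mult_left_mono add_mono) auto
    also have "\<dots> = C ^ (k + 2) * \<epsilon>"
      by (simp add: C_def algebra_simps)
    finally show ?case
      using Suc.IH by simp
  qed
  then show ?thesis
    by (simp add: C_def)
qed

lemma exists_add_mod_eq:
  fixes m i j :: nat
  assumes m: "0 < m" and i: "i < m"
  obtains k where "k < m" and "(j + k) mod m = i"
proof
  define k where "k = (i + m - j mod m) mod m"
  show "k < m"
    using m by (simp add: k_def)
  have "(j + k) mod m = (j mod m + (i + m - j mod m)) mod m"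
    by (simp add: k_def mod_add_left_eq mod_add_right_eq)
  also have "j mod m + (i + m - j mod m) = i + m"
    using mod_less_divisor[OF m, of j] by linarith
  finally show "(j + k) mod m = i"
    using i by simp
qed

lemma vnorm_le_if_consecutive_blocks_small:
  assumes K: "0 \<le> K" and b: "0 < b" and E: "eventE K z b m D U T"
    and Xv: "vnorm (b * m) (mv (b * m) (shiftz (blockX b m D U T) z) v) \<le> \<epsilon>"
    and j: "Suc j < m"
    and small: "vnorm b (blk b v j) \<le> \<epsilon>" "vnorm b (blk b v (Suc j)) \<le> \<epsilon>"
  shows "vnorm (b * m) v \<le> sqrt (real m) * ((real b ^ 5 * (1 + 2 * K)) ^ (m - 1) * \<epsilon>)"
proof -
  define C where "C = real b ^ 5 * (1 + 2 * K)"
  have m: "0 < m"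
    using j by simp
  have eps: "0 \<le> \<epsilon>"
    using small(1) vnorm_nonneg order_trans by blast
  have b5: "1 \<le> real b ^ 5"
    using b by simp
  have C: "1 \<le> C"
    using mult_mono[OF b5, of 1 "1 + 2 * K"] K by (simp add: C_def)
  define c where "c k = vnorm b (blk b v ((j + k) mod m))" for k
  have c_bound: "c k \<le> C ^ k * \<epsilon>" for k
    unfolding C_def
  proof (rule two_step_recurrence_bound)
    show "c 0 \<le> \<epsilon>" "c 1 \<le> \<epsilon>"
      using small j by (simp_all add: c_def)
    show "c (k + 2) \<le> real b ^ 5 * (\<epsilon> + K * (c (k + 1) + c k))" for k
      using blk_le_neighbours[OF m b E Xv, of "j + k"] by (simp add: c_def add.assoc)
  qed (use eps K b5 C C_def in auto)
  have "vnorm b (blk b v i) \<le> C ^ (m - 1) * \<epsilon>" if i: "i < m" for i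
  proof -
    obtain k where k: "k < m" "(j + k) mod m = i"
      using exists_add_mod_eq[OF m i] .
    then have "vnorm b (blk b v i) = c k"
      by (simp add: c_def)
    also have "\<dots> \<le> C ^ k * \<epsilon>"
      by (rule c_bound)
    also have "\<dots> \<le> C ^ (m - 1) * \<epsilon>"
      using C eps k(1) by (intro mult_right_mono power_increasing) auto
    finally show ?thesis .
  qed
  then show ?thesis
    unfolding C_def[symmetric] using C eps by (intro vnorm_le_of_blocks_le) auto
qed

lemma propagated_bound_less_1:
  fixes b C :: real
  assumes b: "1 < b" and C: "0 \<le> C" "C \<le> b ^ 6" and m: "0 < m"
  shows "sqrt (real m) * (C ^ (m - 1) * (b powr (-10 * real m) * real m powr (-1/2))) < 1"
proof -
  have sqrt_m: "sqrt (real m) * real m powr (-1/2) = 1"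
    using m by (simp add: powr_minus powr_half_sqrt[symmetric] powr_add[symmetric])
  have "C ^ (m - 1) \<le> (b ^ 6) ^ (m - 1)"
    by (rule power_mono[OF C(2) C(1)])
  also have "\<dots> = b ^ (6 * (m - 1))"
    by (simp add: power_mult)
  also have "\<dots> < b ^ (10 * m)"
    using b m by (intro power_strict_increasing) auto
  finally have growth: "C ^ (m - 1) < b ^ (10 * m)" .
  have b_powr: "b powr (-10 * real m) = 1 / b ^ (10 * m)"
    using b by (simp add: powr_minus powr_realpow[symmetric] divide_inverse)
  have "sqrt (real m) * (C ^ (m - 1) * (b powr (-10 * real m) * real m powr (-1/2)))
      = C ^ (m - 1) * b powr (-10 * real m) * (sqrt (real m) * real m powr (-1/2))"
    by (simp add: mult_ac)
  also have "\<dots> = C ^ (m - 1) / b ^ (10 * m)"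
    unfolding sqrt_m b_powr by simp
  also have "\<dots> < 1"
    using growth b by (simp add: divide_less_eq)
  finally show ?thesis .
qed

theorem proposition2p7:
  fixes K :: real and z :: complex
  assumes "K > 0"
  shows "\<exists>m0::nat. \<exists>N::nat. \<forall>n b m. N \<le> n \<longrightarrow> b * m = n \<longrightarrow> m0 \<le> m \<longrightarrow> m \<le> b \<longrightarrow>
    (\<forall>Dt Ut Tt :: nat \<Rightarrow> cmat.
      eventE K z b m (\<lambda>i. cscale b (Dt i)) (\<lambda>i. cscale b (Ut i)) (\<lambda>i. cscale b (Tt i)) \<longrightarrow>
      (\<forall>v. vnorm n v = 1 \<longrightarrow>
        vnorm n (mv n (shiftz (blockX b m (\<lambda>i. cscale b (Dt i)) (\<lambda>i. cscale b (Ut i)) (\<lambda>i. cscale b (Tt i))) z) v)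
          \<le> real b powr (-10 * real m) * real m powr (-1/2) \<longrightarrow>
        (\<forall>i. 1 \<le> i \<longrightarrow> i \<le> m - 1 \<longrightarrow>
           vnorm b (blk b v (i - 1)) \<ge> real b powr (-10 * real m) * real m powr (-1/2)
         \<or> vnorm b (blk b v i) \<ge> real b powr (-10 * real m) * real m powr (-1/2))))"
proof (rule exI[of _ "nat \<lceil>1 + 2 * K\<rceil>"], rule exI[of _ 0], intro allI impI)
  \<comment> \<open>m0 only has to force b >= m >= 1 + 2K; no lower bound on n is needed.\<close>
  fix n b m :: nat and Dt Ut Tt :: "nat \<Rightarrow> cmat" and v :: cvec and i :: nat
  let ?D = "\<lambda>i. cscale b (Dt i)" and ?U = "\<lambda>i. cscale b (Ut i)" and ?T = "\<lambda>i. cscale b (Tt i)"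
  let ?\<epsilon> = "real b powr (-10 * real m) * real m powr (-1/2)"
  assume "0 \<le> n" and n: "b * m = n" and mK: "nat \<lceil>1 + 2 * K\<rceil> \<le> m" and mb: "m \<le> b"
    and E: "eventE K z b m ?D ?U ?T" and v: "vnorm n v = 1"
    and Xv: "vnorm n (mv n (shiftz (blockX b m ?D ?U ?T) z) v) \<le> ?\<epsilon>"
    and i: "1 \<le> i" "i \<le> m - 1"
  have bK: "1 + 2 * K \<le> real b"
    using mK mb by linarith
  have j: "Suc (i - 1) < m" and Suc_j: "Suc (i - 1) = i"
    using i by auto
  show "?\<epsilon> \<le> vnorm b (blk b v (i - 1)) \<or> ?\<epsilon> \<le> vnorm b (blk b v i)"
  proof (rule ccontr)
    assume "\<not> ?thesis"
    then have small: "vnorm b (blk b v (i - 1)) \<le> ?\<epsilon>" "vnorm b (blk b v (Suc (i - 1))) \<le> ?\<epsilon>"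
      unfolding Suc_j by auto
    have "1 \<le> sqrt (real m) * ((real b ^ 5 * (1 + 2 * K)) ^ (m - 1) * ?\<epsilon>)"
      using vnorm_le_if_consecutive_blocks_small[OF _ _ E _ j small] v Xv assms bK n by simp
    also have "\<dots> < 1"
    proof (rule propagated_bound_less_1)
      have "real b ^ 5 * (1 + 2 * K) \<le> real b ^ 5 * real b"
        using bK by (intro mult_left_mono) auto
      then show "real b ^ 5 * (1 + 2 * K) \<le> real b ^ 6"
        by (simp add: eval_nat_numeral)
    qed (use assms bK j in auto)
    finally show False
      by simp
  qed
qed

end
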